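(* No online algorithm for the generalized precedence-constrained scheduling (GPS) problem has a sub-polynomial competitive ratio; this holds even when restricted to instances in which all processing functions are equal to one fixed power function $p(z)=z^{\gamma}$.
   Context: The GPS problem: the input is a directed acyclic graph $G=(J,E)$ whose vertices are jobs, each job $j\in J$ having a size $s_j>0$; a number $m$ of identical machines; and for each job $j$ a non-decreasing concave processing function $p_j:[0,m]\to\mathbb{R}_{\ge 0}$ with $p_j(0)=0$. A schedule is a family of functions $A_t:J\to[0,m]$, $t\in(0,\infty)$, where $A_t(j)$ is the (possibly fractional) number of machines allocated to job $j$ at time $t$; preemption is allowed. It must satisfy $\sum_{j}A_t(j)\le m$ for all $t$, and for every arc $(j_1,j_2)\in E$ and every $t$, if $A_t(j_2)>0$ then $\int_0^t p_{j_1}(A_{t'}(j_1))\,dt'\ge s_{j_1}$; every job must be completed. The makespan is $\sup\{t:\sum_{j}A_t(j)>0\}$, to be minimized. A job is available at time $t$ if all its predecessors in $G$ have been completely processed by time $t$. An online algorithm is one that operates on instances where each job (with its size, processing function and outgoing precedence information) is revealed only at the moment it becomes available, and must make its allocation decisions at each time without knowledge of unrevealed jobs. Its competitive ratio is the supremum over instances of the ratio of its makespan to the optimal (offline) makespan; "sub-polynomial" means growing slower than any polynomial in the instance size. *)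

theory Defs
  imports "HOL-Analysis.Analysis"
begin

record gps_inst =
  jobs :: "nat set"
  arcs :: "(nat \<times> nat) set"
  jsize :: "nat \<Rightarrow> real"
  machines :: nat
  proc :: "nat \<Rightarrow> real \<Rightarrow> real"

text \<open>A schedule: A t j = number of machines given to job j at time t (only t > 0 matters).\<close>
type_synonym schedule = "real \<Rightarrow> nat \<Rightarrow> real"

definition valid_instance :: "gps_inst \<Rightarrow> bool" where
  "valid_instance I \<longleftrightarrow>
     finite (jobs I) \<and> arcs I \<subseteq> jobs I \<times> jobs I \<and> acyclic (arcs I) \<and>
     machines I \<ge> 1 \<and>
     (\<forall>j\<in>jobs I. jsize I j > 0) \<and>
     (\<forall>j\<in>jobs I. mono_on {0..real (machines I)} (proc I j) \<and>
                  concave_on {0..real (machines I)} (proc I j) \<and>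
                  (\<forall>z\<in>{0..real (machines I)}. proc I j z \<ge> 0) \<and>
                  proc I j 0 = 0)"

definition processed :: "gps_inst \<Rightarrow> schedule \<Rightarrow> nat \<Rightarrow> real \<Rightarrow> real" where
  "processed I A j t = integral {0..t} (\<lambda>t'. proc I j (A t' j))"

definition feasible :: "gps_inst \<Rightarrow> schedule \<Rightarrow> bool" where
  "feasible I A \<longleftrightarrow>
     (\<forall>t>0. \<forall>j. 0 \<le> A t j \<and> A t j \<le> real (machines I)) \<and>
     (\<forall>t>0. \<forall>j. j \<notin> jobs I \<longrightarrow> A t j = 0) \<and>
     (\<forall>t>0. (\<Sum>j\<in>jobs I. A t j) \<le> real (machines I)) \<and>
     (\<forall>j T. (\<lambda>t. proc I j (A t j)) integrable_on {0..T}) \<and>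
     (\<forall>(j1, j2)\<in>arcs I. \<forall>t>0. A t j2 > 0 \<longrightarrow> processed I A j1 t \<ge> jsize I j1) \<and>
     (\<forall>j\<in>jobs I. \<exists>T. processed I A j T \<ge> jsize I j)"

definition makespan :: "gps_inst \<Rightarrow> schedule \<Rightarrow> ereal" where
  "makespan I A = Sup (insert 0 {ereal t | t. t > 0 \<and> (\<Sum>j\<in>jobs I. A t j) > 0})"

definition opt :: "gps_inst \<Rightarrow> ereal" where
  "opt I = Inf {makespan I A | A. feasible I A}"

definition avail :: "gps_inst \<Rightarrow> schedule \<Rightarrow> real \<Rightarrow> nat set" where
  "avail I A t = {j \<in> jobs I. \<forall>i. (i, j) \<in> arcs I \<longrightarrow> processed I A i t \<ge> jsize I i}"

text \<open>Information revealed to an online algorithm at time t: the number of machines, the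
  available (revealed) jobs, their sizes, processing functions and outgoing arcs.\<close>
definition view :: "gps_inst \<Rightarrow> schedule \<Rightarrow> real \<Rightarrow>
    nat \<times> nat set \<times> (nat \<Rightarrow> real) \<times> (nat \<Rightarrow> real \<Rightarrow> real) \<times> (nat \<times> nat) set" where
  "view I A t = (let R = avail I A t in
     (machines I, R, (\<lambda>j. if j \<in> R then jsize I j else 0),
      (\<lambda>j. if j \<in> R then proc I j else (\<lambda>_. 0)), {(i, j) \<in> arcs I. i \<in> R}))"

definition online_alg :: "(gps_inst \<Rightarrow> bool) \<Rightarrow> (gps_inst \<Rightarrow> schedule) \<Rightarrow> bool" where
  "online_alg C ALG \<longleftrightarrow>
     (\<forall>I. C I \<longrightarrow> feasible I (ALG I)) \<and>
     (\<forall>I I' t. C I \<longrightarrow> C I' \<longrightarrow>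
        (\<forall>t'. 0 < t' \<and> t' \<le> t \<longrightarrow> view I (ALG I) t' = view I' (ALG I') t') \<longrightarrow>
        (\<forall>t'. 0 < t' \<and> t' \<le> t \<longrightarrow> ALG I t' = ALG I' t'))"

definition comp_ratio :: "(gps_inst \<Rightarrow> bool) \<Rightarrow> (gps_inst \<Rightarrow> schedule) \<Rightarrow> nat \<Rightarrow> ereal" where
  "comp_ratio C ALG n =
     Sup {makespan I (ALG I) / opt I | I. C I \<and> jobs I \<noteq> {} \<and> card (jobs I) \<le> n}"

definition subpolynomial :: "(nat \<Rightarrow> ereal) \<Rightarrow> bool" where
  "subpolynomial f \<longleftrightarrow> (\<forall>\<epsilon>>0. eventually (\<lambda>n. f n \<le> ereal (real n powr \<epsilon>)) sequentially)"

definition power_instance :: "real \<Rightarrow> gps_inst \<Rightarrow> bool" where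
  "power_instance \<gamma> I \<longleftrightarrow> valid_instance I \<and> proc I = (\<lambda>j z. z powr \<gamma>)"

end

theory Submission
  imports Defs
begin

text \<open>
  Take \<open>p(z) = \<surd>z\<close> and a single machine. Since \<open>\<Sum>\<^sub>j \<surd>x\<^sub>j \<le> \<surd>k\<close> whenever \<open>\<Sum>\<^sub>j x\<^sub>j \<le> 1\<close>,
  completing \<open>k\<close> unit jobs that are all released at time \<open>b\<close> takes until \<open>b + \<surd>k\<close> at least.
  The instance has \<open>K\<close> levels of \<open>K\<close> chains \<open>a\<^sub>l\<^sub>j \<rightarrow> c\<^sub>l\<^sub>j\<close>, and one job \<open>c\<^sub>l\<^sub>,\<^sub>f\<^sub>l\<close> of each
  level precedes the whole next level. An online algorithm cannot tell which \<open>a\<close>-job of a level is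
  the critical one, so an adversary declares critical the one it completes last; then every level
  costs the algorithm \<open>\<surd>K\<close>, and its makespan is of order \<open>K \<surd>K\<close>. Offline, the critical chain
  can be run at full speed in time \<open>2K\<close> and all other jobs in time \<open>2K\<close> afterwards. With
  \<open>n = 2K\<^sup>2\<close> jobs this gives a ratio of order \<open>n\<^sup>1\<^sup>/\<^sup>4\<close>.
\<close>

section \<open>Concavity of the square root\<close>

lemma concave_on_sqrt: "concave_on {0..} sqrt"
proof (rule concave_on_linorderI)
  fix t x y :: real
  assume t: "0 < t" "t < 1" and xy: "x \<in> {0..}" "y \<in> {0..}"
  have "((1 - t) * sqrt x + t * sqrt y)\<^sup>2 = (1 - t) * x + t * y - t * (1 - t) * (sqrt x - sqrt y)\<^sup>2"
    using xy by (simp add: power2_eq_square algebra_simps)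
  also have "\<dots> \<le> (1 - t) * x + t * y"
    using t by simp
  finally show "(1 - t) * sqrt x + t * sqrt y \<le> sqrt ((1 - t) *\<^sub>R x + t *\<^sub>R y)"
    by (simp add: real_le_rsqrt)
qed simp

lemma concave_on_powr_half: "concave_on {0..} (\<lambda>z::real. z powr (1/2))"
proof -
  have "concave_on {0..} sqrt \<longleftrightarrow> concave_on {0..} (\<lambda>z::real. z powr (1/2))"
    unfolding concave_on_iff by (auto simp: powr_half_sqrt)
  then show ?thesis
    using concave_on_sqrt by blast
qed

lemma sum_sqrt_le_sqrt_card:
  assumes "finite S" "S \<noteq> {}" "\<And>j. j \<in> S \<Longrightarrow> 0 \<le> x j" "sum x S \<le> 1"
  shows "(\<Sum>j\<in>S. sqrt (x j)) \<le> sqrt (card S)"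
proof -
  define n where "n = real (card S)"
  have n: "0 < n"
    using assms(1,2) by (simp add: n_def card_gt_0_iff)
  have "(\<Sum>j\<in>S. (1 / n) * sqrt (x j)) \<le> sqrt (\<Sum>j\<in>S. (1 / n) *\<^sub>R x j)"
    by (rule concave_on_sum[OF assms(1,2) concave_on_sqrt]) (use assms(3) n in \<open>auto simp: n_def\<close>)
  also have "\<dots> = sqrt (sum x S / n)"
    by (simp add: sum_divide_distrib)
  also have "\<dots> \<le> sqrt (1 / n)"
    using assms(4) n by (simp add: divide_right_mono)
  finally have "(\<Sum>j\<in>S. sqrt (x j)) / n \<le> 1 / sqrt n"
    by (simp add: sum_divide_distrib real_sqrt_divide)
  then have "(\<Sum>j\<in>S. sqrt (x j)) \<le> n / sqrt n"
    using n by (simp add: field_simps)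
  also have "\<dots> = sqrt n"
    using n by (simp add: real_div_sqrt)
  finally show ?thesis
    by (simp add: n_def)
qed

section \<open>Single-machine schedules for \<open>p(z) = \<surd>z\<close>\<close>

definition sqrt_feasible :: "gps_inst \<Rightarrow> schedule \<Rightarrow> bool" where
  "sqrt_feasible I A \<longleftrightarrow> power_instance (1/2) I \<and> machines I = 1 \<and> feasible I A"

text \<open>Feasibility constrains a schedule only at positive times, so the rate is cut off at \<open>t \<le> 0\<close>.\<close>

definition rate :: "schedule \<Rightarrow> nat \<Rightarrow> real \<Rightarrow> real" where
  "rate A j t = (if 0 < t then A t j powr (1/2) else 0)"

lemma sqrt_feasible_valid: "sqrt_feasible I A \<Longrightarrow> valid_instance I"
  by (simp add: sqrt_feasible_def power_instance_def)

lemma sqrt_feasible_finite: "sqrt_feasible I A \<Longrightarrow> finite (jobs I)"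
  using sqrt_feasible_valid by (auto simp: valid_instance_def)

lemma sqrt_feasible_proc: "sqrt_feasible I A \<Longrightarrow> proc I = (\<lambda>j z. z powr (1/2))"
  by (simp add: sqrt_feasible_def power_instance_def)

lemma sqrt_feasible_alloc_bounds:
  assumes "sqrt_feasible I A" "0 < t"
  shows "0 \<le> A t j \<and> A t j \<le> 1"
proof -
  have "\<forall>t>0. \<forall>j. 0 \<le> A t j \<and> A t j \<le> real (machines I)" "machines I = 1"
    using assms(1) by (auto simp: sqrt_feasible_def feasible_def)
  then show ?thesis
    using assms(2) by fastforce
qed

lemma sqrt_feasible_alloc_sum:
  assumes "sqrt_feasible I A" "0 < t"
  shows "(\<Sum>j\<in>jobs I. A t j) \<le> 1"
proof -
  have "\<forall>t>0. (\<Sum>j\<in>jobs I. A t j) \<le> real (machines I)" "machines I = 1"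
    using assms(1) by (auto simp: sqrt_feasible_def feasible_def)
  then show ?thesis
    using assms(2) by fastforce
qed

lemma sqrt_feasible_completes:
  assumes "sqrt_feasible I A" "x \<in> jobs I"
  shows "\<exists>T. jsize I x \<le> processed I A x T"
  using assms by (simp add: sqrt_feasible_def feasible_def)

lemma predecessor_completed:
  assumes "sqrt_feasible I A" "(x, y) \<in> arcs I" "0 < t" "0 < A t y"
  shows "jsize I x \<le> processed I A x t"
  using assms unfolding sqrt_feasible_def feasible_def by fastforce

lemma online_alg_sqrt_feasible:
  assumes "online_alg (power_instance (1/2)) ALG" "power_instance (1/2) I" "machines I = 1"
  shows "sqrt_feasible I (ALG I)"
  using assms by (simp add: sqrt_feasible_def online_alg_def)

lemma rate_bounds:
  assumes "sqrt_feasible I A"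
  shows "0 \<le> rate A j t" "rate A j t \<le> 1"
  using sqrt_feasible_alloc_bounds[OF assms, of t j] powr_mono2[of "1/2" "A t j" 1]
  by (auto simp: rate_def)

lemma rate_integrable:
  assumes "sqrt_feasible I A" "0 \<le> a"
  shows "rate A j integrable_on {a..b}"
proof -
  have "(\<lambda>t. A t j powr (1/2)) integrable_on {0..b}"
    using assms(1) sqrt_feasible_proc[OF assms(1)] by (simp add: sqrt_feasible_def feasible_def)
  then have "rate A j integrable_on {0..b}"
    by (rule integrable_spike_finite[where S = "{0}", rotated 2]) (auto simp: rate_def)
  then show ?thesis
    using assms(2) by (cases "a \<le> b") (auto intro: integrable_subinterval_real)
qed

lemma processed_eq_integral_rate:
  assumes "sqrt_feasible I A"
  shows "processed I A j t = integral {0..t} (rate A j)"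
  unfolding processed_def sqrt_feasible_proc[OF assms]
  by (rule integral_spike[where S = "{0}"]) (auto simp: rate_def)

lemma processed_split:
  assumes "sqrt_feasible I A" "0 \<le> s" "s \<le> t"
  shows "processed I A j t = processed I A j s + integral {s..t} (rate A j)"
  unfolding processed_eq_integral_rate[OF assms(1)]
  using Henstock_Kurzweil_Integration.integral_combine[of 0 s t "rate A j"] assms rate_integrable[OF assms(1)] by auto

lemma integral_rate_bounds:
  assumes "sqrt_feasible I A" "0 \<le> s" "s \<le> t"
  shows "0 \<le> integral {s..t} (rate A j)" "integral {s..t} (rate A j) \<le> t - s"
proof -
  show "0 \<le> integral {s..t} (rate A j)"
    by (rule integral_nonneg) (use rate_integrable[OF assms(1,2)] rate_bounds[OF assms(1)] in auto)
  have "integral {s..t} (rate A j) \<le> integral {s..t} (\<lambda>_. 1::real)"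
    by (rule integral_le) (use rate_integrable[OF assms(1,2)] rate_bounds[OF assms(1)] in auto)
  then show "integral {s..t} (rate A j) \<le> t - s"
    using assms by simp
qed

lemma processed_mono:
  assumes "sqrt_feasible I A" "0 \<le> s" "s \<le> t"
  shows "processed I A j s \<le> processed I A j t"
  using processed_split[OF assms, of j] integral_rate_bounds[OF assms, of j] by simp

lemma processed_le_add:
  assumes "sqrt_feasible I A" "0 \<le> s" "s \<le> t"
  shows "processed I A j t \<le> processed I A j s + (t - s)"
  using processed_split[OF assms, of j] integral_rate_bounds[OF assms, of j] by simp

lemma processed_0: "processed I A j 0 = 0"
  by (simp add: processed_def)

lemma processed_cong:
  assumes "sqrt_feasible I A" "sqrt_feasible I' B" "\<And>t. 0 < t \<Longrightarrow> t < s \<Longrightarrow> A t j = B t j"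
  shows "processed I A j s = processed I' B j s"
  unfolding processed_eq_integral_rate[OF assms(1)] processed_eq_integral_rate[OF assms(2)]
  by (rule integral_spike[where S = "{s}"]) (auto simp: rate_def assms(3))

lemma processed_eq_0_if_idle:
  assumes "sqrt_feasible I A" "\<And>t. 0 < t \<Longrightarrow> t < s \<Longrightarrow> A t j = 0"
  shows "processed I A j s = 0"
proof -
  have "processed I A j s = integral {0..s} (\<lambda>_. 0::real)"
    unfolding processed_eq_integral_rate[OF assms(1)]
    by (rule integral_spike[where S = "{s}"]) (auto simp: rate_def assms(2))
  then show ?thesis
    by simp
qed

lemma successor_unstarted:
  assumes g: "sqrt_feasible I A" and arc: "(x, y) \<in> arcs I"
    and unfinished: "processed I A x s < jsize I x" and "0 \<le> s"
  shows "processed I A y s = 0"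
proof (rule processed_eq_0_if_idle[OF g])
  fix t
  assume t: "0 < t" "t < s"
  have "processed I A x t \<le> processed I A x s"
    by (rule processed_mono[OF g]) (use t in auto)
  then have "processed I A x t < jsize I x"
    using unfinished by simp
  then have "\<not> 0 < A t y"
    using predecessor_completed[OF g arc t(1)] by linarith
  then show "A t y = 0"
    using sqrt_feasible_alloc_bounds[OF g t(1), of y] by simp
qed

lemma completion_status_eventually_const:
  assumes g: "sqrt_feasible I A" and s: "0 \<le> s"
  shows "eventually (\<lambda>t. (jsize I x \<le> processed I A x t) = (jsize I x \<le> processed I A x s)) (at_right s)"
proof (cases "jsize I x \<le> processed I A x s")
  case True
  have "(jsize I x \<le> processed I A x t) = (jsize I x \<le> processed I A x s)" if "s < t" for t
    using True processed_mono[OF g s, of t x] that by auto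
  then show ?thesis
    using eventually_at_right_less[of s] by (auto elim: eventually_mono)
next
  case False
  define gap where "gap = jsize I x - processed I A x s"
  have "gap > 0"
    using False by (simp add: gap_def)
  show ?thesis
    unfolding eventually_at_right_field
  proof (intro exI[of _ "s + gap"] conjI allI impI)
    show "s < s + gap"
      using \<open>gap > 0\<close> by simp
    fix t
    assume "s < t" "t < s + gap"
    then show "(jsize I x \<le> processed I A x t) = (jsize I x \<le> processed I A x s)"
      using processed_le_add[OF g s, of t x] False by (simp add: gap_def)
  qed
qed

definition completion_time :: "gps_inst \<Rightarrow> schedule \<Rightarrow> nat \<Rightarrow> real" where
  "completion_time I A x = Inf {t. 0 \<le> t \<and> jsize I x \<le> processed I A x t}"

lemma completion_time_props:
  assumes g: "sqrt_feasible I A" and x: "x \<in> jobs I" "0 < jsize I x"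
  defines "c \<equiv> completion_time I A x"
  shows "0 < c" "jsize I x \<le> processed I A x c"
    "\<And>t. 0 \<le> t \<Longrightarrow> t < c \<Longrightarrow> processed I A x t < jsize I x"
proof -
  define S where "S = {t. 0 \<le> t \<and> jsize I x \<le> processed I A x t}"
  have c: "c = Inf S"
    by (simp add: c_def completion_time_def S_def)
  obtain T where T: "jsize I x \<le> processed I A x T"
    using sqrt_feasible_completes[OF g x(1)] by blast
  have "0 \<le> T"
  proof (rule ccontr)
    assume "\<not> 0 \<le> T"
    then have "processed I A x T = 0"
      by (simp add: processed_def)
    then show False
      using T x(2) by simp
  qed
  then have ne: "S \<noteq> {}"
    using T by (auto simp: S_def)
  have bdd: "bdd_below S"
    by (rule bdd_belowI[of _ 0]) (auto simp: S_def)
  have c0: "0 \<le> c"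
    unfolding c by (rule cInf_greatest[OF ne]) (auto simp: S_def)
  show "processed I A x t < jsize I x" if "0 \<le> t" "t < c" for t
  proof (rule ccontr)
    assume "\<not> processed I A x t < jsize I x"
    then have "t \<in> S"
      using that by (simp add: S_def)
    then have "c \<le> t"
      unfolding c by (rule cInf_lower[OF _ bdd])
    then show False
      using that by simp
  qed
  show attained: "jsize I x \<le> processed I A x c"
  proof (rule ccontr)
    assume unfinished: "\<not> jsize I x \<le> processed I A x c"
    have "eventually (\<lambda>t. (jsize I x \<le> processed I A x t) = (jsize I x \<le> processed I A x c)) (at_right c)"
      by (rule completion_status_eventually_const[OF g c0])
    then obtain b where "c < b" and not_done: "\<And>y. c < y \<Longrightarrow> y < b \<Longrightarrow> \<not> jsize I x \<le> processed I A x y"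
      unfolding eventually_at_right_field using unfinished by blast
    then obtain y where y: "y \<in> S" "y < b"
      using cInf_less_iff[OF ne bdd] by (auto simp: c)
    have "c \<le> y"
      unfolding c by (rule cInf_lower[OF y(1) bdd])
    then show False
      using unfinished not_done[of y] y by (cases "c = y") (auto simp: S_def)
  qed
  show "0 < c"
    using attained c0 x(2) processed_0[of I A x] by (cases "c = 0") auto
qed

lemma parallel_completion_bound:
  assumes g: "sqrt_feasible I A" and X: "X \<subseteq> jobs I" "X \<noteq> {}" and b: "0 \<le> b"
    and idle: "\<And>x t. x \<in> X \<Longrightarrow> 0 < t \<Longrightarrow> t \<le> b \<Longrightarrow> A t x = 0"
    and completed: "\<And>x. x \<in> X \<Longrightarrow> 1 \<le> processed I A x e"
  shows "b + sqrt (card X) \<le> e"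
proof -
  have finX: "finite X"
    using X(1) sqrt_feasible_finite[OF g] by (rule finite_subset)
  obtain x0 where x0: "x0 \<in> X"
    using X(2) by blast
  have unstarted: "processed I A x s = 0" if "x \<in> X" "s \<le> b" for x s
    by (rule processed_eq_0_if_idle[OF g]) (use idle that in auto)
  have eb: "b \<le> e"
    using unstarted[OF x0, of e] completed[OF x0] by force
  have total_rate: "(\<Sum>x\<in>X. rate A x t) \<le> sqrt (card X)" for t
  proof (cases "0 < t")
    case True
    have "(\<Sum>x\<in>X. A t x) \<le> (\<Sum>x\<in>jobs I. A t x)"
      by (rule sum_mono2[OF sqrt_feasible_finite[OF g] X(1)]) (use sqrt_feasible_alloc_bounds[OF g True] in auto)
    also have "\<dots> \<le> 1"
      by (rule sqrt_feasible_alloc_sum[OF g True])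
    finally have "(\<Sum>x\<in>X. sqrt (A t x)) \<le> sqrt (card X)"
      by (intro sum_sqrt_le_sqrt_card finX X(2)) (use sqrt_feasible_alloc_bounds[OF g True] in auto)
    then show ?thesis
      using True sqrt_feasible_alloc_bounds[OF g True] by (simp add: rate_def powr_half_sqrt)
  qed (simp add: rate_def)
  have "real (card X) \<le> (\<Sum>x\<in>X. processed I A x e)"
    using sum_mono[of X "\<lambda>_. 1" "\<lambda>x. processed I A x e"] completed by simp
  also have "\<dots> = (\<Sum>x\<in>X. integral {b..e} (rate A x))"
    using processed_split[OF g b eb] unstarted by simp
  also have "\<dots> = integral {b..e} (\<lambda>t. \<Sum>x\<in>X. rate A x t)"
    by (rule integral_sum[symmetric]) (use finX rate_integrable[OF g b] in auto)
  also have "\<dots> \<le> integral {b..e} (\<lambda>_. sqrt (card X))"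
    by (rule integral_le) (use finX rate_integrable[OF g b] total_rate in \<open>auto intro!: integrable_sum\<close>)
  also have "\<dots> = sqrt (card X) * (e - b)"
    using eb by simp
  finally have "sqrt (card X) * sqrt (card X) \<le> sqrt (card X) * (e - b)"
    by simp
  then have "sqrt (card X) \<le> e - b"
    by (rule mult_left_le_imp_le) (use finX X(2) in \<open>simp add: card_gt_0_iff\<close>)
  then show ?thesis
    by simp
qed

text \<open>The factor \<open>1/2\<close> avoids a limit argument: if the makespan were below \<open>e / 2\<close>, nothing
  would be processed on \<open>(e / 2, e]\<close>.\<close>

lemma makespan_ge_half_completion:
  assumes g: "sqrt_feasible I A" and x: "x \<in> jobs I" and e: "0 < e"
    and unfinished: "\<And>t. 0 \<le> t \<Longrightarrow> t < e \<Longrightarrow> processed I A x t < 1"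
    and finished: "1 \<le> processed I A x e"
  shows "ereal (e / 2) \<le> makespan I A"
proof (rule ccontr)
  assume short: "\<not> ereal (e / 2) \<le> makespan I A"
  have idle: "A t x = 0" if "e / 2 < t" for t
  proof -
    have t: "0 < t"
      using that e by simp
    have "ereal t \<le> makespan I A" if "0 < (\<Sum>j\<in>jobs I. A t j)"
      unfolding makespan_def using t that by (intro Sup_upper) auto
    then have "(\<Sum>j\<in>jobs I. A t j) = 0"
      using short \<open>e / 2 < t\<close> sum_nonneg[of "jobs I" "A t"] sqrt_feasible_alloc_bounds[OF g t]
      by (smt (verit) ereal_less_eq(3) order_trans)
    then show ?thesis
      using sum_nonneg_eq_0_iff[OF sqrt_feasible_finite[OF g], of "A t"] sqrt_feasible_alloc_bounds[OF g t] x
      by auto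
  qed
  have "integral {e/2..e} (rate A x) = integral {e/2..e} (\<lambda>_. 0::real)"
    by (rule integral_spike[where S = "{e/2}"]) (use idle e in \<open>auto simp: rate_def\<close>)
  then have "processed I A x e = processed I A x (e/2)"
    using processed_split[OF g, of "e/2" e x] e by simp
  then show False
    using unfinished[of "e/2"] finished e by simp
qed

section \<open>Views of online algorithms\<close>

lemma view_eventually_const:
  assumes "sqrt_feasible I A" "0 \<le> s"
  shows "eventually (\<lambda>t. view I A t = view I A s) (at_right s)"
proof -
  have v: "finite (jobs I)" "arcs I \<subseteq> jobs I \<times> jobs I"
    using sqrt_feasible_valid[OF assms(1)] by (auto simp: valid_instance_def)
  have "eventually (\<lambda>t. \<forall>i\<in>jobs I. (jsize I i \<le> processed I A i t) = (jsize I i \<le> processed I A i s)) (at_right s)"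
    by (rule eventually_ball_finite) (use v completion_status_eventually_const[OF assms] in auto)
  then show ?thesis
  proof (rule eventually_mono)
    fix t assume h: "\<forall>i\<in>jobs I. (jsize I i \<le> processed I A i t) = (jsize I i \<le> processed I A i s)"
    have "avail I A t = avail I A s"
      unfolding avail_def using h v(2) by blast
    then show "view I A t = view I A s" by (simp add: view_def)
  qed
qed

lemma real_induct_right:
  fixes P :: "real \<Rightarrow> bool"
  assumes step: "\<And>\<sigma>. 0 \<le> \<sigma> \<Longrightarrow> \<sigma> < \<tau> \<Longrightarrow> (\<And>t. 0 < t \<Longrightarrow> t < \<sigma> \<Longrightarrow> P t) \<Longrightarrow>
      \<exists>b>\<sigma>. \<forall>t. 0 < t \<longrightarrow> t < b \<longrightarrow> P t"
    and t: "0 < t" "t < \<tau>"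
  shows "P t"
proof (rule ccontr)
  assume "\<not> P t"
  define D where "D = {t. 0 < t \<and> \<not> P t}"
  have tD: "t \<in> D" and bdd: "bdd_below D"
    using t \<open>\<not> P t\<close> by (auto simp: D_def intro: bdd_belowI[of _ 0])
  define \<sigma> where "\<sigma> = Inf D"
  have \<sigma>: "0 \<le> \<sigma>" "\<sigma> < \<tau>"
    using cInf_greatest[of D 0] cInf_lower[OF tD bdd] tD t by (auto simp: \<sigma>_def D_def)
  have "P s" if "0 < s" "s < \<sigma>" for s
    using that cInf_lower[OF _ bdd, of s] by (force simp: \<sigma>_def D_def)
  then obtain b where b: "\<sigma> < b" "\<And>s. 0 < s \<Longrightarrow> s < b \<Longrightarrow> P s"
    using step[OF \<sigma>] by blast
  have "b \<le> \<sigma>"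
    unfolding \<sigma>_def using tD b(2) by (intro cInf_greatest) (force simp: D_def not_less[symmetric])+
  then show False
    using b(1) by simp
qed

text \<open>Agreement propagates forward in time: the processed amounts up to \<open>\<sigma>\<close> depend only on the
  allocations before \<open>\<sigma>\<close>, and views stay constant for a while to the right of \<open>\<sigma>\<close>.\<close>

lemma online_schedules_agree:
  assumes alg: "online_alg (power_instance (1/2)) ALG"
    and I: "power_instance (1/2) I" "machines I = 1"
    and I': "power_instance (1/2) I'" "machines I' = 1"
    and views: "\<And>s. 0 \<le> s \<Longrightarrow> s < \<tau> \<Longrightarrow> (\<forall>j. processed I (ALG I) j s = processed I' (ALG I') j s)
              \<Longrightarrow> view I (ALG I) s = view I' (ALG I') s"
    and t: "0 < t" "t < \<tau>"
  shows "ALG I t = ALG I' t"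
proof (rule real_induct_right[OF _ t])
  fix \<sigma> :: real
  assume \<sigma>: "0 \<le> \<sigma>" "\<sigma> < \<tau>" and below: "\<And>t. 0 < t \<Longrightarrow> t < \<sigma> \<Longrightarrow> ALG I t = ALG I' t"
  have gI: "sqrt_feasible I (ALG I)" and gI': "sqrt_feasible I' (ALG I')"
    using online_alg_sqrt_feasible[OF alg] I I' by auto
  have view_eq: "view I (ALG I) s = view I' (ALG I') s" if "0 \<le> s" "s \<le> \<sigma>" for s
    using views[of s] processed_cong[OF gI gI'] below that \<sigma> by auto
  have "eventually (\<lambda>t. view I (ALG I) t = view I (ALG I) \<sigma> \<and> view I' (ALG I') t = view I' (ALG I') \<sigma>)
      (at_right \<sigma>)"
    by (intro eventually_conj view_eventually_const[OF gI \<sigma>(1)] view_eventually_const[OF gI' \<sigma>(1)])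
  then obtain b where b: "\<sigma> < b" and const: "\<And>t. \<sigma> < t \<Longrightarrow> t < b \<Longrightarrow>
      view I (ALG I) t = view I (ALG I) \<sigma> \<and> view I' (ALG I') t = view I' (ALG I') \<sigma>"
    unfolding eventually_at_right_field by blast
  define t1 where "t1 = (\<sigma> + b) / 2"
  have t1: "\<sigma> < t1" "t1 < b"
    using b by (auto simp: t1_def)
  have "view I (ALG I) t' = view I' (ALG I') t'" if "0 < t'" "t' \<le> t1" for t'
    using const[of t'] view_eq[of t'] view_eq[of \<sigma>] \<sigma>(1) that t1 by (cases "t' \<le> \<sigma>") auto
  then have "ALG I t' = ALG I' t'" if "0 < t'" "t' \<le> t1" for t'
    using alg I(1) I'(1) that unfolding online_alg_def by blast
  then show "\<exists>b>\<sigma>. \<forall>t. 0 < t \<longrightarrow> t < b \<longrightarrow> ALG I t = ALG I' t"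
    using t1(1) by (intro exI[of _ t1]) auto
qed

section \<open>The layered instances\<close>

definition job_a :: "nat \<Rightarrow> nat \<Rightarrow> nat \<Rightarrow> nat" where
  "job_a K l j = 2 * (l * K + j)"

definition job_c :: "nat \<Rightarrow> nat \<Rightarrow> nat \<Rightarrow> nat" where
  "job_c K l j = 2 * (l * K + j) + 1"

definition level_of :: "nat \<Rightarrow> nat \<Rightarrow> nat" where
  "level_of K x = x div 2 div K"

definition index_of :: "nat \<Rightarrow> nat \<Rightarrow> nat" where
  "index_of K x = x div 2 mod K"

definition layered_inst :: "nat \<Rightarrow> nat \<Rightarrow> (nat \<Rightarrow> nat) \<Rightarrow> gps_inst" where
  "layered_inst K L f = \<lparr>jobs = {..<2 * L * K},
     arcs = {(job_a K l j, job_c K l j) | l j. l < L \<and> j < K} \<union>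
            {(job_c K l (f l), job_a K (Suc l) j) | l j. Suc l < L \<and> j < K},
     jsize = (\<lambda>_. 1), machines = 1, proc = (\<lambda>j z. z powr (1/2))\<rparr>"

lemma layered_inst_simps [simp]:
  "jobs (layered_inst K L f) = {..<2 * L * K}"
  "jsize (layered_inst K L f) = (\<lambda>_. 1)"
  "machines (layered_inst K L f) = 1"
  "proc (layered_inst K L f) = (\<lambda>j z. z powr (1/2))"
  by (simp_all add: layered_inst_def)

lemma arcs_layered_inst: "(y, x) \<in> arcs (layered_inst K L f) \<longleftrightarrow>
   (\<exists>l j. l < L \<and> j < K \<and> y = job_a K l j \<and> x = job_c K l j) \<or>
   (\<exists>l j. Suc l < L \<and> j < K \<and> y = job_c K l (f l) \<and> x = job_a K (Suc l) j)"
  by (auto simp: layered_inst_def)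

lemma layered_inst_cong: "(\<And>l. Suc l < L \<Longrightarrow> f l = g l) \<Longrightarrow> layered_inst K L f = layered_inst K L g"
  unfolding layered_inst_def by (auto 0 4)

lemma level_index_less: "l < L \<Longrightarrow> j < K \<Longrightarrow> l * K + j < L * (K::nat)"
  using mult_le_mono1[of "Suc l" L K] by simp

lemma job_a_lt: "l < L \<Longrightarrow> j < K \<Longrightarrow> job_a K l j < 2 * L * K"
  using level_index_less[of l L j K] by (simp add: job_a_def)

lemma job_c_lt: "l < L \<Longrightarrow> j < K \<Longrightarrow> job_c K l j < 2 * L * K"
  using level_index_less[of l L j K] by (simp add: job_c_def mult.assoc)

lemma level_of_job_a [simp]: "j < K \<Longrightarrow> level_of K (job_a K l j) = l"
  and index_of_job_a [simp]: "j < K \<Longrightarrow> index_of K (job_a K l j) = j"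
  and level_of_job_c [simp]: "j < K \<Longrightarrow> level_of K (job_c K l j) = l"
  and index_of_job_c [simp]: "j < K \<Longrightarrow> index_of K (job_c K l j) = j"
  by (auto simp: level_of_def index_of_def job_a_def job_c_def)

lemma parity_job_a [simp]: "job_a K l j mod 2 = 0" "odd (job_a K l j) = False"
  and parity_job_c [simp]: "job_c K l j mod 2 = 1" "odd (job_c K l j)"
  by (auto simp: job_a_def job_c_def)

lemma job_a_neq_job_c [simp]: "job_a K l j \<noteq> job_c K l' j'" "job_c K l' j' \<noteq> job_a K l j"
  by (metis parity_job_a(2) parity_job_c(2))+

lemma job_a_eq_iff [simp]: "j < K \<Longrightarrow> j' < K \<Longrightarrow> job_a K l j = job_a K l' j' \<longleftrightarrow> l = l' \<and> j = j'"
  by (metis level_of_job_a index_of_job_a)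

lemma job_c_eq_iff [simp]: "j < K \<Longrightarrow> j' < K \<Longrightarrow> job_c K l j = job_c K l' j' \<longleftrightarrow> l = l' \<and> j = j'"
  by (metis level_of_job_c index_of_job_c)

lemma card_level_jobs: "card (job_a K l ` {..<K}) = K"
  by (subst card_image) (auto simp: inj_on_def)

lemma level_index_decomp: "x = 2 * (level_of K x * K + index_of K x) + x mod 2"
  by (simp add: level_of_def index_of_def)

lemma level_of_less: "x < 2 * L * K \<Longrightarrow> level_of K x < L"
  by (simp add: level_of_def less_mult_imp_div_less div_less_iff_less_mult mult.commute)

lemma index_of_less: "0 < K \<Longrightarrow> index_of K x < K"
  by (simp add: index_of_def)

lemma job_decompose:
  assumes "x < 2 * L * K"
  obtains l j where "l < L" "j < K" "x = job_a K l j \<or> x = job_c K l j"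
proof
  show "level_of K x < L"
    using assms by (rule level_of_less)
  show "index_of K x < K"
    using assms by (intro index_of_less) (cases K; simp)
  show "x = job_a K (level_of K x) (index_of K x) \<or> x = job_c K (level_of K x) (index_of K x)"
    using level_index_decomp[of x K] by (auto simp: job_a_def job_c_def)
qed

lemma job_a_in_jobs: "j < K \<Longrightarrow> l < K \<Longrightarrow> job_a K l j \<in> jobs (layered_inst K K f)"
  using job_a_lt[of l K j K] by simp

lemma arcs_layered_inst_less:
  assumes "(y, x) \<in> arcs (layered_inst K L f)" "\<And>l. f l < K"
  shows "y < x"
  using assms(1) unfolding arcs_layered_inst
proof (elim disjE exE conjE)
  fix l j
  assume "y = job_a K l j" "x = job_c K l j"
  then show "y < x"
    by (simp add: job_a_def job_c_def)
next
  fix l j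
  assume "y = job_c K l (f l)" "x = job_a K (Suc l) j"
  moreover have "l * K + f l < Suc l * K"
    using assms(2)[of l] by simp
  ultimately show "y < x"
    by (simp add: job_a_def job_c_def)
qed

lemma power_instance_layered_inst:
  assumes f: "\<And>l. f l < K" and "K \<ge> 1" "L \<ge> 1"
  shows "power_instance (1/2) (layered_inst K L f)"
proof -
  have "arcs (layered_inst K L f) \<subseteq> jobs (layered_inst K L f) \<times> jobs (layered_inst K L f)"
    using job_a_lt job_c_lt f by (auto simp: arcs_layered_inst dest: Suc_lessD)
  moreover have "acyclic (arcs (layered_inst K L f))"
    by (rule acyclic_subset[OF wf_acyclic[OF wf_less_than]]) (use arcs_layered_inst_less f in auto)
  moreover have "mono_on {0..1} (\<lambda>z::real. z powr (1/2))"
    by (auto simp: mono_on_def intro!: powr_mono2)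
  moreover have "concave_on {0..1} (\<lambda>z::real. z powr (1/2))"
    using concave_on_powr_half unfolding concave_on_def by (rule convex_on_subset) auto
  ultimately show ?thesis
    using assms by (auto simp: power_instance_def valid_instance_def)
qed

lemma arcs_layered_inst_truncate:
  assumes "L \<le> L'"
  shows "(y, x) \<in> arcs (layered_inst K L f) \<longleftrightarrow> (y, x) \<in> arcs (layered_inst K L' f) \<and> x < 2 * L * K"
proof
  assume arc: "(y, x) \<in> arcs (layered_inst K L f)"
  then have "(y, x) \<in> arcs (layered_inst K L' f)"
    using assms unfolding arcs_layered_inst by (blast intro: less_le_trans)
  moreover have "x < 2 * L * K"
    using arc job_a_lt job_c_lt unfolding arcs_layered_inst by blast
  ultimately show "(y, x) \<in> arcs (layered_inst K L' f) \<and> x < 2 * L * K"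
    by simp
next
  assume "(y, x) \<in> arcs (layered_inst K L' f) \<and> x < 2 * L * K"
  then show "(y, x) \<in> arcs (layered_inst K L f)"
    using level_of_less[of x L K] by (auto simp: arcs_layered_inst)
qed

lemma arcs_layered_inst_crossing:
  assumes "(y, x) \<in> arcs (layered_inst K L' f)" "y < 2 * L * K" "2 * L * K \<le> x" "\<forall>l. f l < K"
  shows "y = job_c K (L - 1) (f (L - 1))"
  using assms(1) unfolding arcs_layered_inst
proof (elim disjE exE conjE)
  fix l j
  assume "j < K" "y = job_a K l j" "x = job_c K l j"
  then show ?thesis
    using level_of_less[OF assms(2)] job_c_lt[of l L j K] assms(3) by simp
next
  fix l j
  assume "j < K" "y = job_c K l (f l)" "x = job_a K (Suc l) j"
  moreover have "l < L"
    using level_of_less[OF assms(2)] assms(4) calculation by simp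
  moreover have "\<not> Suc l < L"
    using job_a_lt[of "Suc l" L j K] assms(3) calculation by auto
  ultimately have "l = L - 1"
    by linarith
  then show ?thesis
    using \<open>y = job_c K l (f l)\<close> by simp
qed

lemma layered_inst_chain_unstarted:
  assumes g: "sqrt_feasible (layered_inst K L f) A" and f: "\<forall>l. f l < K" and s: "0 \<le> s"
    and unfinished: "processed (layered_inst K L f) A (job_a K i (f i)) s < 1"
    and "i \<le> l"
  shows "l < L \<Longrightarrow> processed (layered_inst K L f) A (job_c K l (f l)) s = 0"
  using \<open>i \<le> l\<close>
proof (induction l rule: dec_induct)
  case base
  then have "(job_a K i (f i), job_c K i (f i)) \<in> arcs (layered_inst K L f)"
    using f by (auto simp: arcs_layered_inst)
  then show ?case
    using successor_unstarted[OF g _ _ s] unfinished by simp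
next
  case (step n)
  then have "(job_c K n (f n), job_a K (Suc n) (f (Suc n))) \<in> arcs (layered_inst K L f)"
    and "(job_a K (Suc n) (f (Suc n)), job_c K (Suc n) (f (Suc n))) \<in> arcs (layered_inst K L f)"
    using f by (auto simp: arcs_layered_inst)
  then show ?case
    using successor_unstarted[OF g _ _ s] step by simp
qed

lemma layered_inst_upper_levels_unavailable:
  assumes g: "sqrt_feasible (layered_inst K L f) A" and f: "\<forall>l. f l < K" and s: "0 \<le> s"
    and unfinished: "processed (layered_inst K L f) A (job_a K i (f i)) s < 1"
    and x: "2 * Suc i * K \<le> x"
  shows "x \<notin> avail (layered_inst K L f) A s"
proof
  let ?J = "layered_inst K L f"
  assume avail: "x \<in> avail ?J A s"
  then have "x < 2 * L * K"
    by (simp add: avail_def)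
  then obtain l j where lj: "l < L" "j < K" "x = job_a K l j \<or> x = job_c K l j"
    by (rule job_decompose)
  have "\<not> l < Suc i"
    using lj x job_a_lt[of l "Suc i" j K] job_c_lt[of l "Suc i" j K] by auto
  then obtain l0 where l0: "l = Suc l0" "i \<le> l0"
    by (cases l) auto
  have arc_c: "(job_c K l0 (f l0), job_a K l j) \<in> arcs ?J" and arc_a: "(job_a K l j, job_c K l j) \<in> arcs ?J"
    using lj l0 by (auto simp: arcs_layered_inst)
  have "processed ?J A (job_c K l0 (f l0)) s = 0"
    by (rule layered_inst_chain_unstarted[OF g f s unfinished l0(2)]) (use lj l0 in simp)
  moreover from this have "processed ?J A (job_a K l j) s = 0"
    using successor_unstarted[OF g arc_c _ s] by simp
  ultimately show False
    using lj(3) avail arc_c arc_a by (auto simp: avail_def)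
qed

lemma view_layered_inst_truncate:
  assumes gJ: "sqrt_feasible (layered_inst K L' f) A" and gI: "sqrt_feasible (layered_inst K L f) B"
    and L: "L \<le> L'" "1 \<le> L" and f: "\<forall>l. f l < K" and s: "0 \<le> s"
    and same: "\<And>j. processed (layered_inst K L' f) A j s = processed (layered_inst K L f) B j s"
    and unfinished: "processed (layered_inst K L f) B (job_a K (L - 1) (f (L - 1))) s < 1"
  shows "view (layered_inst K L' f) A s = view (layered_inst K L f) B s"
proof -
  let ?J = "layered_inst K L' f" and ?I = "layered_inst K L f"
  have upper: "x \<notin> avail ?J A s" if "2 * L * K \<le> x" for x
    by (rule layered_inst_upper_levels_unavailable[OF gJ f s, of "L - 1"]) (use unfinished same that L in auto)
  have avail_eq: "avail ?J A s = avail ?I B s"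
  proof (rule set_eqI)
    fix x
    show "x \<in> avail ?J A s \<longleftrightarrow> x \<in> avail ?I B s"
    proof (cases "x < 2 * L * K")
      case True
      have "2 * L * K \<le> 2 * L' * K"
        using L(1) by simp
      then have "x < 2 * L' * K"
        using True by linarith
      then show ?thesis
        using True by (auto simp: avail_def arcs_layered_inst_truncate[OF L(1)] same)
    next
      case False
      then show ?thesis
        using upper by (simp add: avail_def)
    qed
  qed
  have "L - 1 < L"
    using L(2) by simp
  then have "(job_a K (L - 1) (f (L - 1)), job_c K (L - 1) (f (L - 1))) \<in> arcs ?I"
    using f unfolding arcs_layered_inst by blast
  then have critical_unavailable: "job_c K (L - 1) (f (L - 1)) \<notin> avail ?I B s"
    using unfinished by (auto simp: avail_def)
  have "x < 2 * L * K" if "(y, x) \<in> arcs ?J" "y \<in> avail ?I B s" for y x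
  proof (rule ccontr)
    assume "\<not> x < 2 * L * K"
    then have "y = job_c K (L - 1) (f (L - 1))"
      using arcs_layered_inst_crossing[OF that(1) _ _ f] that(2) by (simp add: avail_def)
    then show False
      using critical_unavailable that(2) by simp
  qed
  then have out_arcs: "{(y, x) \<in> arcs ?J. y \<in> avail ?I B s} = {(y, x) \<in> arcs ?I. y \<in> avail ?I B s}"
    by (auto simp: arcs_layered_inst_truncate[OF L(1)])
  show ?thesis
    unfolding view_def Let_def avail_eq layered_inst_simps out_arcs ..
qed

section \<open>An offline schedule of makespan \<open>4K\<close>\<close>

lemma has_integral_sqrt_block:
  fixes lo hi sh :: real
  assumes "0 \<le> lo" "lo < hi" "0 < sh" and F: "\<And>t. F t = (if lo < t \<and> t \<le> hi then sh else 0)"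
    and that: "lo \<le> T"
  shows "((\<lambda>t. F t powr (1/2)) has_integral (sqrt sh * (min hi T - lo))) {0..T}"
proof -
  have h: "((\<lambda>t. if t \<in> {lo..hi} then sqrt sh else 0) has_integral (sqrt sh * (min hi T - lo))) {0..T}"
  proof (subst has_integral_restrict_Int)
    have eq: "{lo..hi} \<inter> {0..T} = {lo..min hi T}" using assms that by auto
    have "((\<lambda>_. sqrt sh) has_integral (sqrt sh * (min hi T - lo))) {lo..min hi T}"
      using has_integral_const_real[of "sqrt sh" lo "min hi T"] assms that by (simp add: mult.commute)
    then show "((\<lambda>_. sqrt sh) has_integral (sqrt sh * (min hi T - lo))) ({lo..hi} \<inter> {0..T})"
      unfolding eq .
  qed
  show ?thesis
    by (rule has_integral_spike_finite[of "{lo}", OF _ _ h])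
       (use assms in \<open>auto simp: F powr_half_sqrt\<close>)
qed

lemma sqrt_block_integrable:
  fixes lo hi sh :: real
  assumes "0 \<le> lo" "lo < hi" "0 < sh" and F: "\<And>t. F t = (if lo < t \<and> t \<le> hi then sh else 0)"
  shows "(\<lambda>t. F t powr (1/2)) integrable_on {0..T}"
proof (cases "lo \<le> T")
  case True then show ?thesis using has_integral_sqrt_block[OF assms True] by blast
next
  case False
  have "(\<lambda>t. (0::real)) integrable_on {0..T}" by (rule integrable_0)
  then show ?thesis
    by (rule integrable_spike_finite[where S="{}", rotated 2]) (use False in \<open>auto simp: F\<close>)
qed

lemma integral_sqrt_block:
  fixes lo hi sh :: real
  assumes "0 \<le> lo" "lo < hi" "0 < sh" and F: "\<And>t. F t = (if lo < t \<and> t \<le> hi then sh else 0)"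
    and "hi \<le> T"
  shows "integral {0..T} (\<lambda>t. F t powr (1/2)) = sqrt sh * (hi - lo)"
  using has_integral_sqrt_block[OF assms(1-4), of T] assms by (simp add: integral_unique min_def)

definition critical :: "nat \<Rightarrow> (nat \<Rightarrow> nat) \<Rightarrow> nat \<Rightarrow> bool" where
  "critical K f x \<longleftrightarrow> index_of K x = f (level_of K x)"

text \<open>The offline schedule runs the critical chain \<open>a\<^sub>0\<^sub>,\<^sub>f\<^sub>0, c\<^sub>0\<^sub>,\<^sub>f\<^sub>0, a\<^sub>1\<^sub>,\<^sub>f\<^sub>1, \<dots>\<close> on the whole
  machine, one job per unit of time, during \<open>[0, 2K]\<close>; then all other \<open>a\<close>-jobs during \<open>[2K, 3K]\<close>
  and all other \<open>c\<close>-jobs during \<open>[3K, 4K]\<close>, each on a share \<open>1/K\<^sup>2\<close> of the machine.\<close>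

definition start :: "nat \<Rightarrow> (nat \<Rightarrow> nat) \<Rightarrow> nat \<Rightarrow> nat" where
  "start K f x = (if critical K f x then 2 * level_of K x + x mod 2 else if odd x then 3 * K else 2 * K)"

definition duration :: "nat \<Rightarrow> (nat \<Rightarrow> nat) \<Rightarrow> nat \<Rightarrow> nat" where
  "duration K f x = (if critical K f x then 1 else K)"

definition share :: "nat \<Rightarrow> (nat \<Rightarrow> nat) \<Rightarrow> nat \<Rightarrow> real" where
  "share K f x = (if critical K f x then 1 else 1 / (real K)\<^sup>2)"

definition offline_sched :: "nat \<Rightarrow> (nat \<Rightarrow> nat) \<Rightarrow> schedule" where
  "offline_sched K f t x =
     (if x < 2 * K * K \<and> real (start K f x) < t \<and> t \<le> real (start K f x + duration K f x)
      then share K f x else 0)"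

lemma share_props: "K \<ge> 1 \<Longrightarrow> 0 < share K f x \<and> share K f x \<le> 1 \<and> sqrt (share K f x) * real (duration K f x) = 1"
  by (auto simp: share_def duration_def real_sqrt_divide)

lemma offline_sched_eq: "x < 2 * K * K \<Longrightarrow> offline_sched K f t x =
   (if real (start K f x) < t \<and> t \<le> real (start K f x) + real (duration K f x) then share K f x else 0)"
  by (simp add: offline_sched_def)

lemma duration_pos: "K \<ge> 1 \<Longrightarrow> 0 < duration K f x"
  by (simp add: duration_def)

lemma offline_sched_completes:
  assumes K: "K \<ge> 1" and x: "x < 2 * K * K" and T: "real (start K f x + duration K f x) \<le> T"
  shows "processed (layered_inst K K f) (offline_sched K f) x T = 1"
proof -
  let ?lo = "real (start K f x)" and ?hi = "real (start K f x) + real (duration K f x)"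
  have "processed (layered_inst K K f) (offline_sched K f) x T = sqrt (share K f x) * (?hi - ?lo)"
    unfolding processed_def layered_inst_simps
    by (rule integral_sqrt_block)
       (use T share_props[OF K] duration_pos[OF K] offline_sched_eq[OF x] in auto)
  then show ?thesis
    using share_props[OF K] by simp
qed

lemma sum_le_one_if_few_active:
  fixes g :: "nat \<Rightarrow> real"
  assumes "finite X" "\<And>x. x \<in> X \<Longrightarrow> g x \<le> (if x \<in> S then c else 0)" "finite S" "0 \<le> c"
    "real (card S) * c \<le> 1"
  shows "sum g X \<le> 1"
proof -
  have "sum g X \<le> (\<Sum>x\<in>X. if x \<in> S then c else 0)" by (rule sum_mono) (use assms in auto)
  also have "\<dots> = (\<Sum>x\<in>{x\<in>X. x \<in> S}. c)" by (rule sum.inter_filter[symmetric]) (use assms in auto)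
  also have "\<dots> = real (card {x\<in>X. x \<in> S}) * c" by simp
  also have "\<dots> \<le> real (card S) * c"
    by (intro mult_right_mono) (use assms in \<open>auto intro!: card_mono\<close>)
  finally show ?thesis using assms by simp
qed

lemma critical_finish_le:
  assumes "x < 2 * K * K" "critical K f x"
  shows "start K f x + duration K f x \<le> 2 * K"
proof -
  have "level_of K x < K" using level_of_less[OF assms(1)] .
  moreover have "x mod 2 \<le> 1" by simp
  ultimately show ?thesis using assms(2) by (simp add: start_def duration_def)
qed

lemma noncritical_start_ge: "\<not> critical K f x \<Longrightarrow> 2 * K \<le> start K f x"
  by (simp add: start_def)

lemma finish_le:
  assumes "x < 2 * K * K"
  shows "start K f x + duration K f x \<le> 4 * K"
  using critical_finish_le[OF assms, of f] by (cases "critical K f x") (auto simp: start_def duration_def)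

lemma card_parity_class_le: "card {x. x < 2 * N \<and> x mod 2 = p} \<le> (N::nat)"
proof -
  have "{x. x < 2 * N \<and> x mod 2 = p} \<subseteq> (\<lambda>m. 2 * m + p) ` {..<N}"
  proof
    fix x
    assume "x \<in> {x. x < 2 * N \<and> x mod 2 = p}"
    then have "x = 2 * (x div 2) + p" "x div 2 < N"
      by auto
    then show "x \<in> (\<lambda>m. 2 * m + p) ` {..<N}"
      by blast
  qed
  then have "card {x. x < 2 * N \<and> x mod 2 = p} \<le> card ((\<lambda>m. 2 * m + p) ` {..<N})"
    by (intro card_mono) auto
  also have "\<dots> \<le> N"
    using card_image_le[of "{..<N}" "\<lambda>m. 2 * m + p"] by simp
  finally show ?thesis .
qed

lemma nat_eq_if_same_unit_interval:
  fixes m n :: nat and t :: real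
  assumes "m < t" "t \<le> m + 1" "n < t" "t \<le> n + 1"
  shows "m = n"
proof -
  have "real m < real (n + 1)" "real n < real (m + 1)"
    using assms by simp_all
  then show ?thesis
    unfolding of_nat_less_iff by linarith
qed

lemma active_critical_unique:
  assumes "critical K f x" "real (start K f x) < t" "t \<le> real (start K f x) + 1"
    and "critical K f y" "real (start K f y) < t" "t \<le> real (start K f y) + 1"
  shows "x = y"
proof -
  have "start K f x = start K f y"
    using assms by (intro nat_eq_if_same_unit_interval[of _ t]) auto
  then have "2 * level_of K x + x mod 2 = 2 * level_of K y + y mod 2"
    using assms(1,4) by (simp add: start_def)
  then have "level_of K x = level_of K y" "x mod 2 = y mod 2"
    by presburger+
  moreover have "index_of K x = index_of K y"
    using assms(1,4) calculation by (simp add: critical_def)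
  ultimately show "x = y"
    using level_index_decomp[of x K] level_index_decomp[of y K] by simp
qed

lemma offline_sched_sum_early:
  fixes t :: real
  assumes "t \<le> 2 * K"
  shows "(\<Sum>x\<in>{..<2 * K * K}. offline_sched K f t x) \<le> 1"
proof -
  define S where
    "S = {x. x < 2 * K * K \<and> critical K f x \<and> real (start K f x) < t \<and> t \<le> real (start K f x) + 1}"
  have "offline_sched K f t x \<le> (if x \<in> S then 1 else 0)" if "x < 2 * K * K" for x
  proof (cases "critical K f x")
    case True
    then show ?thesis
      using that by (auto simp: offline_sched_def S_def share_def duration_def)
  next
    case False
    then have "t \<le> real (start K f x)"
      using noncritical_start_ge[OF False] assms by linarith
    then show ?thesis
      by (auto simp: offline_sched_def)
  qed
  moreover have "card S \<le> 1"
    using active_critical_unique[of K f _ t] by (auto simp: S_def intro: card_le_Suc0_iff_eq[THEN iffD2])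
  ultimately show ?thesis
    by (intro sum_le_one_if_few_active[where S = S and c = 1]) (auto simp: S_def)
qed

lemma offline_sched_sum_late:
  fixes t :: real
  assumes "2 * K < t"
  shows "(\<Sum>x\<in>{..<2 * K * K}. offline_sched K f t x) \<le> 1"
proof -
  define p where "p = (if t \<le> 3 * K then 0 else 1 :: nat)"
  define S where "S = {x. x < 2 * (K * K) \<and> x mod 2 = p}"
  have "offline_sched K f t x \<le> (if x \<in> S then 1 / (real K)\<^sup>2 else 0)" if "x < 2 * K * K" for x
  proof (cases "critical K f x \<or> \<not> (real (start K f x) < t \<and> t \<le> real (start K f x + duration K f x))")
    case True
    then show ?thesis
      using critical_finish_le[OF that, of f] assms by (auto simp: offline_sched_def simp del: of_nat_add)
  next
    case False
    then have "x mod 2 = p"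
      by (cases "odd x") (auto simp: start_def duration_def p_def odd_iff_mod_2_eq_one even_iff_mod_2_eq_zero)
    then show ?thesis
      using that False by (auto simp: offline_sched_def S_def share_def)
  qed
  moreover have "real (card S) \<le> real K * real K"
    using card_parity_class_le[of "K * K" p] unfolding S_def of_nat_mult[symmetric] of_nat_le_iff .
  then have "real (card S) * (1 / (real K)\<^sup>2) \<le> 1"
    by (cases "K = 0") (simp_all add: field_simps power2_eq_square)
  ultimately show ?thesis
    by (intro sum_le_one_if_few_active[where S = S and c = "1 / (real K)\<^sup>2"]) (auto simp: S_def)
qed

lemma offline_sched_sum_le_one: "(\<Sum>x\<in>{..<2 * K * K}. offline_sched K f t x) \<le> 1"
  using offline_sched_sum_early offline_sched_sum_late by (cases "t \<le> 2 * K") auto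

lemma arc_finish_le_start:
  assumes "(y, x) \<in> arcs (layered_inst K K f)" "\<forall>l. f l < K"
  shows "start K f y + duration K f y \<le> start K f x"
  using assms(1) unfolding arcs_layered_inst
proof (elim disjE exE conjE)
  fix l j assume h: "l < K" "j < K" "y = job_a K l j" "x = job_c K l j"
  then have "critical K f y = critical K f x" by (simp add: critical_def)
  then show ?thesis using h by (cases "critical K f x") (auto simp: start_def duration_def)
next
  fix l j assume h: "Suc l < K" "j < K" "y = job_c K l (f l)" "x = job_a K (Suc l) j"
  have fl: "f l < K" using assms(2) by simp
  have cy: "critical K f y" using h fl by (simp add: critical_def)
  have "start K f y + duration K f y = 2 * l + 2" using cy h fl by (simp add: start_def duration_def)
  moreover have "2 * l + 2 \<le> start K f x" using h by (auto simp: start_def)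
  ultimately show ?thesis by simp
qed

lemma offline_sched_integrable:
  assumes "K \<ge> 1"
  shows "(\<lambda>t. offline_sched K f t x powr (1/2)) integrable_on {0..T}"
proof (cases "x < 2 * K * K")
  case True
  show ?thesis
    by (rule sqrt_block_integrable[where lo="real (start K f x)" and hi="real (start K f x) + real (duration K f x)"
      and sh="share K f x"]) (use assms share_props[OF assms] duration_pos[OF assms] offline_sched_eq[OF True] in auto)
next
  case False
  then have "(\<lambda>t. offline_sched K f t x powr (1/2)) = (\<lambda>t. 0)" by (auto simp: offline_sched_def)
  then show ?thesis by (simp add: integrable_0)
qed

lemma offline_sched_feasible:
  assumes K: "K \<ge> 1" and fK: "\<forall>l. f l < K"
  shows "feasible (layered_inst K K f) (offline_sched K f)"
  unfolding feasible_def
proof (intro conjI allI impI ballI)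
  fix t :: real and j assume "0 < t"
  show "0 \<le> offline_sched K f t j" "offline_sched K f t j \<le> real (machines (layered_inst K K f))"
    using share_props[OF K, of f j] by (auto simp: offline_sched_def)
next
  fix t :: real and j assume "0 < t" "j \<notin> jobs (layered_inst K K f)"
  then show "offline_sched K f t j = 0" by (simp add: offline_sched_def)
next
  fix t :: real assume "0 < t"
  then show "(\<Sum>j\<in>jobs (layered_inst K K f). offline_sched K f t j) \<le> real (machines (layered_inst K K f))"
    using offline_sched_sum_le_one by simp
next
  fix j T show "(\<lambda>t. proc (layered_inst K K f) j (offline_sched K f t j)) integrable_on {0..T}"
    using offline_sched_integrable[OF K] by simp
next
  fix p assume p: "p \<in> arcs (layered_inst K K f)"
  obtain y x where yx: "p = (y, x)" by (cases p)
  have arc: "(y, x) \<in> arcs (layered_inst K K f)" using p yx by simp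
  have sub: "arcs (layered_inst K K f) \<subseteq> jobs (layered_inst K K f) \<times> jobs (layered_inst K K f)"
    using power_instance_layered_inst[OF _ K K, of f] fK by (auto simp: power_instance_def valid_instance_def)
  have xy: "x < 2 * K * K" "y < 2 * K * K" using sub arc by auto
  have ord: "start K f y + duration K f y \<le> start K f x" by (rule arc_finish_le_start[OF arc fK])
  show "case p of (j1, j2) \<Rightarrow> \<forall>t>0. 0 < offline_sched K f t j2 \<longrightarrow> jsize (layered_inst K K f) j1 \<le> processed (layered_inst K K f) (offline_sched K f) j1 t"
    unfolding yx prod.case
  proof (intro allI impI)
    fix t :: real assume "0 < t" "0 < offline_sched K f t x"
    then have "real (start K f x) < t" by (auto simp: offline_sched_def split: if_splits)
    then have "real (start K f y + duration K f y) \<le> t" using ord by linarith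
    then show "jsize (layered_inst K K f) y \<le> processed (layered_inst K K f) (offline_sched K f) y t"
      using offline_sched_completes[OF K xy(2)] by simp
  qed
next
  fix j assume "j \<in> jobs (layered_inst K K f)"
  then have "processed (layered_inst K K f) (offline_sched K f) j (real (start K f j + duration K f j)) = 1"
    using offline_sched_completes[OF K] by simp
  then show "\<exists>T. jsize (layered_inst K K f) j \<le> processed (layered_inst K K f) (offline_sched K f) j T"
    by (intro exI[of _ "real (start K f j + duration K f j)"]) simp
qed

lemma makespan_offline_sched: "makespan (layered_inst K K f) (offline_sched K f) \<le> ereal (4 * K)"
  unfolding makespan_def
proof (rule Sup_least)
  fix z assume "z \<in> insert 0 {ereal t |t. 0 < t \<and> 0 < (\<Sum>j\<in>jobs (layered_inst K K f). offline_sched K f t j)}"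
  then consider "z = 0" | t where "z = ereal t" "0 < t" "0 < (\<Sum>j\<in>jobs (layered_inst K K f). offline_sched K f t j)" by blast
  then show "z \<le> ereal (4 * K)"
  proof cases
    case 1 then show ?thesis by simp
  next
    case 2
    then obtain x where x: "x \<in> jobs (layered_inst K K f)" "offline_sched K f t x \<noteq> 0"
      by (metis (no_types, lifting) less_irrefl sum.neutral)
    then have "t \<le> real (start K f x + duration K f x)" "x < 2 * K * K" by (auto simp: offline_sched_def split: if_splits)
    moreover have "real (start K f x + duration K f x) \<le> real (4 * K)"
      using finish_le[OF \<open>x < 2 * K * K\<close>] by (simp only: of_nat_le_iff)
    ultimately have "t \<le> 4 * K"
      by simp
    then show ?thesis using 2 by simp
  qed
qed

lemma opt_layered_inst_le:
  assumes K: "K \<ge> 1" and fK: "\<forall>l. f l < K"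
  shows "opt (layered_inst K K f) \<le> ereal (4 * K)"
proof -
  have "opt (layered_inst K K f) \<le> makespan (layered_inst K K f) (offline_sched K f)"
    unfolding opt_def by (rule Inf_lower) (use offline_sched_feasible[OF K fK] in blast)
  then show ?thesis using makespan_offline_sched[of K f] by simp
qed

section \<open>The adversary\<close>

text \<open>The adversary fixes the critical index of level \<open>i\<close> after watching \<open>ALG\<close> on the instance
  truncated after level \<open>i\<close>: it is the \<open>a\<close>-job of level \<open>i\<close> that \<open>ALG\<close> completes last. Until
  that moment the truncated and the full instance look the same to an online algorithm.\<close>

definition compl_a :: "(gps_inst \<Rightarrow> schedule) \<Rightarrow> nat \<Rightarrow> (nat \<Rightarrow> nat) \<Rightarrow> nat \<Rightarrow> nat \<Rightarrow> real" where
  "compl_a ALG K f i j = completion_time (layered_inst K (Suc i) f) (ALG (layered_inst K (Suc i) f)) (job_a K i j)"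

definition latest_a :: "(gps_inst \<Rightarrow> schedule) \<Rightarrow> nat \<Rightarrow> (nat \<Rightarrow> nat) \<Rightarrow> nat \<Rightarrow> nat" where
  "latest_a ALG K f i = (SOME j. j < K \<and> (\<forall>j'<K. compl_a ALG K f i j' \<le> compl_a ALG K f i j))"

primrec choice_upto :: "(gps_inst \<Rightarrow> schedule) \<Rightarrow> nat \<Rightarrow> nat \<Rightarrow> nat \<Rightarrow> nat" where
  "choice_upto ALG K 0 = (\<lambda>_. 0)"
| "choice_upto ALG K (Suc i) = (choice_upto ALG K i)(i := latest_a ALG K (choice_upto ALG K i) i)"

definition adv_choice :: "(gps_inst \<Rightarrow> schedule) \<Rightarrow> nat \<Rightarrow> nat \<Rightarrow> nat" where
  "adv_choice ALG K = choice_upto ALG K K"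

abbreviation adv_inst :: "(gps_inst \<Rightarrow> schedule) \<Rightarrow> nat \<Rightarrow> nat \<Rightarrow> gps_inst" where
  "adv_inst ALG K L \<equiv> layered_inst K L (adv_choice ALG K)"

definition level_end :: "(gps_inst \<Rightarrow> schedule) \<Rightarrow> nat \<Rightarrow> nat \<Rightarrow> real" where
  "level_end ALG K i =
     completion_time (adv_inst ALG K (Suc i)) (ALG (adv_inst ALG K (Suc i))) (job_a K i (adv_choice ALG K i))"

lemma latest_a_props:
  assumes "K \<ge> 1"
  shows "latest_a ALG K f i < K \<and> (\<forall>j<K. compl_a ALG K f i j \<le> compl_a ALG K f i (latest_a ALG K f i))"
proof -
  let ?c = "compl_a ALG K f i"
  have fin: "finite (?c ` {..<K})" "?c ` {..<K} \<noteq> {}"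
    using assms by (auto simp: lessThan_empty_iff)
  obtain j where "j < K" "?c j = Max (?c ` {..<K})"
    using Max_in[OF fin] by auto
  then have "\<exists>j. j < K \<and> (\<forall>j'<K. ?c j' \<le> ?c j)"
    using Max_ge[OF fin(1)] by auto
  then show ?thesis
    unfolding latest_a_def by (rule someI_ex)
qed

lemma choice_upto_less: "K \<ge> 1 \<Longrightarrow> choice_upto ALG K i l < K"
  by (induction i arbitrary: l) (auto simp: latest_a_props)

lemma choice_upto_stable: "i \<le> i' \<Longrightarrow> l < i \<Longrightarrow> choice_upto ALG K i' l = choice_upto ALG K i l"
  by (induction i' rule: dec_induct) auto

lemma adv_choice_less: "K \<ge> 1 \<Longrightarrow> adv_choice ALG K l < K"
  by (simp add: adv_choice_def choice_upto_less)

lemma adv_choice_latest: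
  assumes "i < K"
  shows "adv_choice ALG K i = latest_a ALG K (choice_upto ALG K i) i"
    and "layered_inst K (Suc i) (choice_upto ALG K i) = adv_inst ALG K (Suc i)"
proof -
  show "adv_choice ALG K i = latest_a ALG K (choice_upto ALG K i) i"
    using choice_upto_stable[of "Suc i" K i ALG] assms by (simp add: adv_choice_def)
  show "layered_inst K (Suc i) (choice_upto ALG K i) = adv_inst ALG K (Suc i)"
    by (rule layered_inst_cong) (use choice_upto_stable[of i K] assms in \<open>auto simp: adv_choice_def\<close>)
qed

lemma sqrt_feasible_adv_inst:
  assumes alg: "online_alg (power_instance (1/2)) ALG" and K: "K \<ge> 1" and L: "L \<ge> 1"
  shows "sqrt_feasible (adv_inst ALG K L) (ALG (adv_inst ALG K L))"
proof -
  have "power_instance (1/2) (adv_inst ALG K L)"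
    by (rule power_instance_layered_inst) (use adv_choice_less K L in auto)
  then show ?thesis
    by (rule online_alg_sqrt_feasible[OF alg]) simp
qed

lemma level_end_truncated:
  assumes alg: "online_alg (power_instance (1/2)) ALG" and K: "K \<ge> 1" and i: "i < K"
  defines "I \<equiv> adv_inst ALG K (Suc i)"
  shows "0 < level_end ALG K i"
    and "\<And>t. 0 \<le> t \<Longrightarrow> t < level_end ALG K i \<Longrightarrow> processed I (ALG I) (job_a K i (adv_choice ALG K i)) t < 1"
    and "\<And>j. j < K \<Longrightarrow> 1 \<le> processed I (ALG I) (job_a K i j) (level_end ALG K i)"
proof -
  have g: "sqrt_feasible I (ALG I)"
    unfolding I_def using sqrt_feasible_adv_inst[OF alg K] by simp
  have job: "job_a K i j \<in> jobs I" if "j < K" for j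
    using job_a_lt[of i "Suc i" j K] that by (simp add: I_def)
  have ct: "0 < completion_time I (ALG I) (job_a K i j)"
    "1 \<le> processed I (ALG I) (job_a K i j) (completion_time I (ALG I) (job_a K i j))"
    "\<And>t. 0 \<le> t \<Longrightarrow> t < completion_time I (ALG I) (job_a K i j) \<Longrightarrow> processed I (ALG I) (job_a K i j) t < 1"
    if "j < K" for j
    using completion_time_props[OF g job[OF that]] by (auto simp: I_def)
  have level_end: "level_end ALG K i = completion_time I (ALG I) (job_a K i (adv_choice ALG K i))"
    by (simp add: level_end_def I_def)
  have latest: "completion_time I (ALG I) (job_a K i j) \<le> level_end ALG K i" if "j < K" for j
    using latest_a_props[OF K, of ALG "choice_upto ALG K i" i] that
    by (simp add: level_end compl_a_def adv_choice_latest[OF i] I_def)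
  show "0 < level_end ALG K i"
    using ct(1) adv_choice_less[OF K] by (simp add: level_end)
  show "processed I (ALG I) (job_a K i (adv_choice ALG K i)) t < 1" if "0 \<le> t" "t < level_end ALG K i" for t
    using ct(3) adv_choice_less[OF K] that by (simp add: level_end)
  show "1 \<le> processed I (ALG I) (job_a K i j) (level_end ALG K i)" if "j < K" for j
  proof -
    have "processed I (ALG I) (job_a K i j) (completion_time I (ALG I) (job_a K i j))
        \<le> processed I (ALG I) (job_a K i j) (level_end ALG K i)"
      by (rule processed_mono[OF g]) (use ct(1)[OF that] latest[OF that] in auto)
    then show ?thesis
      using ct(2)[OF that] by simp
  qed
qed

lemma processed_adv_inst_eq_truncated:
  assumes alg: "online_alg (power_instance (1/2)) ALG" and K: "K \<ge> 1" and i: "i < K"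
    and t: "0 \<le> t" "t \<le> level_end ALG K i"
  shows "processed (adv_inst ALG K K) (ALG (adv_inst ALG K K)) x t
       = processed (adv_inst ALG K (Suc i)) (ALG (adv_inst ALG K (Suc i))) x t"
proof -
  let ?J = "adv_inst ALG K K" and ?I = "adv_inst ALG K (Suc i)"
  have vJ: "power_instance (1/2) ?J" and vI: "power_instance (1/2) ?I"
    using power_instance_layered_inst adv_choice_less[OF K] K by auto
  have gJ: "sqrt_feasible ?J (ALG ?J)" and gI: "sqrt_feasible ?I (ALG ?I)"
    using sqrt_feasible_adv_inst[OF alg K] K by auto
  have "ALG ?J s = ALG ?I s" if "0 < s" "s < level_end ALG K i" for s
  proof (rule online_schedules_agree[OF alg vJ _ vI _ _ that])
    fix s
    assume "0 \<le> s" "s < level_end ALG K i" "\<forall>j. processed ?J (ALG ?J) j s = processed ?I (ALG ?I) j s"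
    then show "view ?J (ALG ?J) s = view ?I (ALG ?I) s"
      using level_end_truncated(2)[OF alg K i] i adv_choice_less[OF K]
      by (intro view_layered_inst_truncate gJ gI) auto
  qed simp_all
  then show ?thesis
    using t by (intro processed_cong[OF gJ gI]) auto
qed

lemma level_end_props:
  assumes alg: "online_alg (power_instance (1/2)) ALG" and K: "K \<ge> 1" and i: "i < K"
  defines "J \<equiv> adv_inst ALG K K"
  shows "0 < level_end ALG K i"
    and "\<And>t. 0 \<le> t \<Longrightarrow> t < level_end ALG K i \<Longrightarrow> processed J (ALG J) (job_a K i (adv_choice ALG K i)) t < 1"
    and "\<And>j. j < K \<Longrightarrow> 1 \<le> processed J (ALG J) (job_a K i j) (level_end ALG K i)"
  using level_end_truncated[OF alg K i] processed_adv_inst_eq_truncated[OF alg K i]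
    less_imp_le[of _ "level_end ALG K i"]
  by (auto simp: J_def)

lemma next_level_idle:
  assumes alg: "online_alg (power_instance (1/2)) ALG" and K: "K \<ge> 1" and i: "Suc i < K"
    and j: "j < K" and t: "0 < t" "t \<le> level_end ALG K i"
  shows "ALG (adv_inst ALG K K) t (job_a K (Suc i) j) = 0"
proof -
  let ?J = "adv_inst ALG K K" and ?F = "adv_choice ALG K"
  have g: "sqrt_feasible ?J (ALG ?J)"
    using sqrt_feasible_adv_inst[OF alg K K] .
  have arc_a: "(job_a K i (?F i), job_c K i (?F i)) \<in> arcs ?J"
    and arc_c: "(job_c K i (?F i), job_a K (Suc i) j) \<in> arcs ?J"
    using adv_choice_less[OF K] i j unfolding arcs_layered_inst by (blast dest: Suc_lessD)+
  have "ALG ?J t' (job_c K i (?F i)) = 0" if "0 < t'" "t' < level_end ALG K i" for t'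
  proof (rule ccontr)
    assume "ALG ?J t' (job_c K i (?F i)) \<noteq> 0"
    then have "0 < ALG ?J t' (job_c K i (?F i))"
      using sqrt_feasible_alloc_bounds[OF g that(1), of "job_c K i (?F i)"] by linarith
    then have "1 \<le> processed ?J (ALG ?J) (job_a K i (?F i)) t'"
      using predecessor_completed[OF g arc_a that(1)] by simp
    moreover have "processed ?J (ALG ?J) (job_a K i (?F i)) t' < 1"
      using level_end_props(2)[OF alg K _ _ that(2)] i that(1) by simp
    ultimately show False
      by simp
  qed
  then have "processed ?J (ALG ?J) (job_c K i (?F i)) t = 0"
    by (intro processed_eq_0_if_idle[OF g]) (use t in auto)
  then show ?thesis
    using predecessor_completed[OF g arc_c t(1)] sqrt_feasible_alloc_bounds[OF g t(1), of "job_a K (Suc i) j"]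
    by force
qed

lemma level_end_ge:
  assumes alg: "online_alg (power_instance (1/2)) ALG" and K: "K \<ge> 1"
  shows "i < K \<Longrightarrow> real (Suc i) * sqrt K \<le> level_end ALG K i"
proof (induction i)
  case 0
  have "0 + sqrt (card (job_a K 0 ` {..<K})) \<le> level_end ALG K 0"
    by (rule parallel_completion_bound[OF sqrt_feasible_adv_inst[OF alg K K]])
       (use level_end_props(3)[OF alg K 0] job_a_in_jobs K in \<open>auto simp: lessThan_empty_iff\<close>)
  then show ?case
    by (simp add: card_level_jobs)
next
  case (Suc i)
  have "level_end ALG K i + sqrt (card (job_a K (Suc i) ` {..<K})) \<le> level_end ALG K (Suc i)"
    by (rule parallel_completion_bound[OF sqrt_feasible_adv_inst[OF alg K K]])
       (use level_end_props(1,3)[OF alg K] Suc.prems next_level_idle[OF alg K Suc.prems] job_a_in_jobs K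
        in \<open>auto simp: less_imp_le lessThan_empty_iff\<close>)
  then show ?case
    using Suc by (simp add: card_level_jobs algebra_simps)
qed

lemma makespan_online_ge:
  assumes alg: "online_alg (power_instance (1/2)) ALG" and K: "K \<ge> 1"
  shows "ereal (real K * sqrt K / 2) \<le> makespan (adv_inst ALG K K) (ALG (adv_inst ALG K K))"
proof -
  have i: "K - 1 < K" "Suc (K - 1) = K"
    using K by auto
  have "ereal (level_end ALG K (K - 1) / 2) \<le> makespan (adv_inst ALG K K) (ALG (adv_inst ALG K K))"
    by (rule makespan_ge_half_completion[OF sqrt_feasible_adv_inst[OF alg K K] job_a_in_jobs[OF _ i(1)]
          level_end_props[OF alg K i(1)]]) (use adv_choice_less[OF K] in auto)
  moreover have "real K * sqrt K \<le> level_end ALG K (K - 1)"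
    using level_end_ge[OF alg K i(1)] i by simp
  ultimately show ?thesis
    by (meson divide_right_mono ereal_less_eq(3) order_trans zero_le_numeral)
qed

section \<open>The lower bound on the competitive ratio\<close>

lemma opt_nonneg: "0 \<le> opt I"
  unfolding opt_def makespan_def by (rule Inf_greatest) (auto intro: Sup_upper2)

text \<open>The case \<open>q = 0\<close> is included: there \<open>a / q = \<infinity>\<close> for positive \<open>a\<close>.\<close>

lemma ereal_frac_le:
  fixes a q :: ereal and a0 o0 :: real
  assumes "0 < a0" "ereal a0 \<le> a" "0 \<le> q" "q \<le> ereal o0" "0 < o0"
  shows "ereal (a0 / o0) \<le> a / q"
proof (cases q)
  case (real r)
  show ?thesis
  proof (cases "r = 0")
    case True
    then show ?thesis using assms real by (cases a) (auto simp: divide_ereal_def)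
  next
    case False
    then have r: "0 < r" "r \<le> o0" using assms real by auto
    show ?thesis
    proof (cases a)
      case (real x)
      have "a0 / o0 \<le> x / r"
        using assms r real by (intro frac_le) auto
      then show ?thesis using \<open>a = ereal x\<close> \<open>q = ereal r\<close> r by simp
    qed (use assms r real in auto)
  qed
qed (use assms in auto)

lemma comp_ratio_ge:
  assumes alg: "online_alg (power_instance (1/2)) ALG" and K: "K \<ge> 1"
  shows "ereal (sqrt K / 8) \<le> comp_ratio (power_instance (1/2)) ALG (2 * K * K)"
proof -
  let ?J = "adv_inst ALG K K"
  have "power_instance (1/2) ?J"
    by (rule power_instance_layered_inst) (use adv_choice_less[OF K] K in auto)
  then have ratio: "makespan ?J (ALG ?J) / opt ?J \<le> comp_ratio (power_instance (1/2)) ALG (2 * K * K)"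
    unfolding comp_ratio_def using K by (intro Sup_upper) (auto simp: lessThan_empty_iff)
  have "ereal ((real K * sqrt K / 2) / (4 * real K)) \<le> makespan ?J (ALG ?J) / opt ?J"
    using makespan_online_ge[OF alg K] opt_layered_inst_le[OF K] adv_choice_less[OF K] opt_nonneg K
    by (intro ereal_frac_le) auto
  also have "(real K * sqrt K / 2) / (4 * real K) = sqrt K / 8"
    using K by (simp add: field_simps)
  finally show ?thesis
    using ratio by (rule order_trans)
qed

lemma powr_one_eighth_less:
  fixes K :: nat
  assumes "K \<ge> 8192"
  shows "real (2 * K * K) powr (1/8) < sqrt K / 8"
proof -
  have K: "8192 \<le> real K"
    using assms by simp
  have pos: "0 < real (2 * K * K)"
    using K by simp
  have "(real (2 * K * K) powr (1/8)) ^ 8 = (real (2 * K * K) powr (1/8)) powr real 8"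
    using K by (intro powr_realpow[symmetric]) simp
  also have "\<dots> = 2 * real K * real K"
    using pos by (simp add: powr_powr)
  also have "\<dots> < real K ^ 4 / 8 ^ 8"
  proof -
    have "2 * 8 ^ 8 < 8192 * (8192 :: real)"
      by simp
    also have "\<dots> \<le> real K * real K"
      using K by (intro mult_mono) auto
    finally have "2 * 8 ^ 8 * (real K * real K) < real K * real K * (real K * real K)"
      using K by (intro mult_strict_right_mono) auto
    then show ?thesis
      by (simp add: field_simps power4_eq_xxxx)
  qed
  also have "\<dots> = (sqrt K / 8) ^ 8"
    by (simp add: power_divide power_mult[of "sqrt K" 2 4, simplified])
  finally show ?thesis
    by (rule power_less_imp_less_base) simp
qed

theorem theorem3:
  shows "\<exists>\<gamma>::real. 0 < \<gamma> \<and> \<gamma> < 1 \<and>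
    (\<forall>ALG. online_alg (power_instance \<gamma>) ALG \<longrightarrow>
       \<not> subpolynomial (comp_ratio (power_instance \<gamma>) ALG))"
proof (intro exI[of _ "1/2"] conjI allI impI)
  fix ALG assume alg: "online_alg (power_instance (1/2)) ALG"
  show "\<not> subpolynomial (comp_ratio (power_instance (1/2)) ALG)"
  proof
    assume "subpolynomial (comp_ratio (power_instance (1/2)) ALG)"
    then have "eventually (\<lambda>n. comp_ratio (power_instance (1/2)) ALG n \<le> ereal (real n powr (1/8))) sequentially"
      unfolding subpolynomial_def by simp
    then obtain N where N: "\<And>n. n \<ge> N \<Longrightarrow> comp_ratio (power_instance (1/2)) ALG n \<le> ereal (real n powr (1/8))"
      unfolding eventually_sequentially by blast
    define K where "K = N + 8192"
    have K: "K \<ge> 1" "K \<ge> 8192" by (auto simp: K_def)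
    have "N \<le> K" by (simp add: K_def)
    also have "K \<le> 2 * K * K" using K by simp
    finally have "comp_ratio (power_instance (1/2)) ALG (2 * K * K) \<le> ereal (real (2 * K * K) powr (1/8))"
      using N by blast
    moreover have "ereal (sqrt K / 8) \<le> comp_ratio (power_instance (1/2)) ALG (2 * K * K)"
      by (rule comp_ratio_ge[OF alg K(1)])
    ultimately have "sqrt K / 8 \<le> real (2 * K * K) powr (1/8)" by (meson ereal_less_eq(3) order_trans)
    then show False using powr_one_eighth_less[OF K(2)] by simp
  qed
qed simp_all

end
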